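(* For every integer $k\ge 2$, the complete graph $\mathcal K_k$ is an almost minor of the $(2k-2)\times(2k-2)$ grid graph $\mathcal G_{2k-2}$.
   Context: The $n\times n$ grid graph $\mathcal G_n$ has vertices $v_{i,j}$, $i,j\in[n]$, with $v_{i,j}$ adjacent to $v_{i',j'}$ iff $|i-i'|+|j-j'|=1$. For graphs $\mathcal G_X,\mathcal G_Y$ with vertex sets $X,Y$, a map $M:Y\to 2^X$ is almost minor if: (1) $|M(y)|\in\{1,2\}$ for every $y\in Y$; (2) for every $x\in X$ there is $y\in Y$ with $M(y)=\{x\}$, and for all $x,x'$ adjacent in $\mathcal G_X$ there are $y,y'$ adjacent in $\mathcal G_Y$ with $M(y)=\{x\}$ and $M(y')=\{x'\}$; (3) for each $x\in X$ the set $\{y: x\in M(y)\}$ is connected in $\mathcal G_Y$; (4) if $M(y)=\{x,x'\}$ with $x\ne x'$ and $y'$ is adjacent to $y$, then $M(y')=\{x\}$ or $M(y')=\{x'\}$. $\mathcal G_X$ is an almost minor of $\mathcal G_Y$ if such a map exists. *)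

theory Defs
  imports Main
begin

definition connected_in :: "'a set \<Rightarrow> ('a \<Rightarrow> 'a \<Rightarrow> bool) \<Rightarrow> 'a set \<Rightarrow> bool" where
  "connected_in V E S \<longleftrightarrow> S \<subseteq> V \<and>
     (\<forall>u\<in>S. \<forall>v\<in>S. (\<lambda>a b. a \<in> S \<and> b \<in> S \<and> E a b)\<^sup>*\<^sup>* u v)"

definition almost_minor_map ::
  "'a set \<Rightarrow> ('a \<Rightarrow> 'a \<Rightarrow> bool) \<Rightarrow> 'b set \<Rightarrow> ('b \<Rightarrow> 'b \<Rightarrow> bool) \<Rightarrow> ('b \<Rightarrow> 'a set) \<Rightarrow> bool" where
  "almost_minor_map X EXr Y EYr M \<longleftrightarrow>
     (\<forall>y\<in>Y. M y \<subseteq> X \<and> card (M y) \<in> {1, 2}) \<and>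
     (\<forall>x\<in>X. \<exists>y\<in>Y. M y = {x}) \<and>
     (\<forall>x\<in>X. \<forall>x'\<in>X. EXr x x' \<longrightarrow>
        (\<exists>y\<in>Y. \<exists>y'\<in>Y. EYr y y' \<and> M y = {x} \<and> M y' = {x'})) \<and>
     (\<forall>x\<in>X. connected_in Y EYr {y\<in>Y. x \<in> M y}) \<and>
     (\<forall>y\<in>Y. \<forall>x x'. M y = {x, x'} \<and> x \<noteq> x' \<longrightarrow>
        (\<forall>y'\<in>Y. EYr y y' \<longrightarrow> M y' = {x} \<or> M y' = {x'}))"

definition is_almost_minor ::
  "'a set \<Rightarrow> ('a \<Rightarrow> 'a \<Rightarrow> bool) \<Rightarrow> 'b set \<Rightarrow> ('b \<Rightarrow> 'b \<Rightarrow> bool) \<Rightarrow> bool" where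
  "is_almost_minor X EXr Y EYr \<longleftrightarrow> (\<exists>M. almost_minor_map X EXr Y EYr M)"

definition grid_vertices :: "nat \<Rightarrow> (nat \<times> nat) set" where
  "grid_vertices n = {1..n} \<times> {1..n}"

definition grid_adj :: "nat \<times> nat \<Rightarrow> nat \<times> nat \<Rightarrow> bool" where
  "grid_adj p q \<longleftrightarrow>
     \<bar>int (fst p) - int (fst q)\<bar> + \<bar>int (snd p) - int (snd q)\<bar> = 1"

definition complete_vertices :: "nat \<Rightarrow> nat set" where
  "complete_vertices k = {1..k}"

definition complete_adj :: "nat \<Rightarrow> nat \<Rightarrow> bool" where
  "complete_adj x y \<longleftrightarrow> x \<noteq> y"

end

theory Submission
  imports Defs
begin

text \<open>
  A vertex a < k of K_k gets the cells
  of row 2a-1 on and right of the diagonal, the even-column cells of row 2a to its right, and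
  the cells of column 2a-1 above the diagonal; vertex k gets everything strictly below the
  diagonal. Each branch set is connected (a hook for a < k, a staircase for k). Row 2a of a
  touches column 2b-1 of b for a < b < k, and the corner (2a-1, 2a-1) of a touches the cell
  below it, which belongs to k; this realises every edge of K_k. Cells carrying two labels are exactly the crossings of an odd row with an
  odd column above the diagonal; their horizontal neighbours lie in even columns and their
  vertical neighbours in even rows, so each neighbour carries just one of the two labels.
\<close>

fun complete_grid_map :: "nat \<Rightarrow> nat \<times> nat \<Rightarrow> nat set" where
  "complete_grid_map k (r, c) =
     (if c < r then {k}
      else if even c then {(r + 1) div 2}
      else if even r then {(c + 1) div 2}
      else {(r + 1) div 2, (c + 1) div 2})"

lemma connected_in_if_descent:
  fixes f :: "'a \<Rightarrow> nat"
  assumes "symp E" and "S \<subseteq> V" and "root \<in> S"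
    and descent: "\<And>s. s \<in> S \<Longrightarrow> s \<noteq> root \<Longrightarrow> \<exists>t\<in>S. E s t \<and> f t < f s"
  shows "connected_in V E S"
proof -
  let ?R = "\<lambda>a b. a \<in> S \<and> b \<in> S \<and> E a b"
  have to_root: "?R\<^sup>*\<^sup>* s root" if "s \<in> S" for s
    using that
  proof (induction "f s" arbitrary: s rule: less_induct)
    case less
    show ?case
    proof (cases "s = root")
      case False
      then obtain t where "t \<in> S" "E s t" "f t < f s"
        using descent less.prems by blast
      then have "?R\<^sup>*\<^sup>* t root" and "?R s t"
        using less by blast+
      then show ?thesis
        by (rule converse_rtranclp_into_rtranclp[rotated])
    qed simp
  qed
  have "symp ?R"
    using \<open>symp E\<close> by (auto simp: symp_def)
  then have "symp ?R\<^sup>*\<^sup>*"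
    by (rule symp_rtranclp)
  then show ?thesis
    unfolding connected_in_def using \<open>S \<subseteq> V\<close> to_root
    by (meson rtranclp_trans sympD)
qed

lemma grid_adj_Pair:
  "grid_adj (r, c) (r', c') \<longleftrightarrow> \<bar>int r - int r'\<bar> + \<bar>int c - int c'\<bar> = 1"
  by (simp add: grid_adj_def)

lemma symp_grid_adj: "symp grid_adj"
  by (auto simp: symp_def grid_adj_def)

lemma grid_vertices_Pair: "(r, c) \<in> grid_vertices n \<longleftrightarrow> 1 \<le> r \<and> r \<le> n \<and> 1 \<le> c \<and> c \<le> n"
  by (auto simp: grid_vertices_def)

lemma last_in_complete_grid_map: "k \<in> complete_grid_map k (r, c) \<longleftrightarrow> c < r"
  if "1 \<le> r" "r \<le> 2 * k - 2" "1 \<le> c" "c \<le> 2 * k - 2"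
  using that by auto

lemma less_in_complete_grid_map:
  assumes "1 \<le> a" "a < k"
  shows "a \<in> complete_grid_map k (r, c) \<longleftrightarrow>
    (r = 2 * a - 1 \<and> 2 * a - 1 \<le> c) \<or> (r = 2 * a \<and> even c \<and> 2 * a \<le> c) \<or>
    (c = 2 * a - 1 \<and> r \<le> c)"
  using assms by (auto split: if_splits)

lemma complete_grid_map_range:
  assumes "k \<ge> 2" "y \<in> grid_vertices (2 * k - 2)"
  shows "complete_grid_map k y \<subseteq> complete_vertices k \<and> card (complete_grid_map k y) \<in> {1, 2}"
proof -
  obtain r c where y: "y = (r, c)" "1 \<le> r" "r \<le> 2 * k - 2" "1 \<le> c" "c \<le> 2 * k - 2"
    using assms(2) by (cases y) (auto simp: grid_vertices_Pair)
  then have "(r + 1) div 2 \<in> complete_vertices k" "(c + 1) div 2 \<in> complete_vertices k"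
    "k \<in> complete_vertices k"
    using assms(1) by (auto simp: complete_vertices_def)
  then show ?thesis
    using y by (auto simp: card_insert_if)
qed

lemma complete_grid_map_singleton:
  assumes "k \<ge> 2" "x \<in> complete_vertices k"
  shows "\<exists>y\<in>grid_vertices (2 * k - 2). complete_grid_map k y = {x}"
proof (cases "x = k")
  case True
  then show ?thesis
    using assms by (intro bexI[of _ "(2, 1)"]) (auto simp: grid_vertices_Pair)
next
  case False
  then show ?thesis
    using assms by (intro bexI[of _ "(2 * x - 1, 2 * x - 1)"])
      (auto simp: grid_vertices_Pair complete_vertices_def)
qed

lemma complete_grid_map_edge:
  assumes "x \<in> complete_vertices k" "x' \<in> complete_vertices k" "x \<noteq> x'"
  shows "\<exists>y\<in>grid_vertices (2 * k - 2). \<exists>y'\<in>grid_vertices (2 * k - 2).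
           grid_adj y y' \<and> complete_grid_map k y = {x} \<and> complete_grid_map k y' = {x'}"
proof -
  have ordered: "\<exists>y\<in>grid_vertices (2 * k - 2). \<exists>y'\<in>grid_vertices (2 * k - 2).
      grid_adj y y' \<and> complete_grid_map k y = {a} \<and> complete_grid_map k y' = {b}"
    if "1 \<le> a" "a < b" "b \<le> k" for a b
  proof (cases "b = k")
    case True
    then show ?thesis
      using that by (intro bexI[of _ "(2 * a - 1, 2 * a - 1)"] bexI[of _ "(2 * a, 2 * a - 1)"])
        (auto simp: grid_vertices_Pair grid_adj_Pair)
  next
    case False
    then show ?thesis
      using that by (intro bexI[of _ "(2 * a, 2 * b)"] bexI[of _ "(2 * a, 2 * b - 1)"])
        (auto simp: grid_vertices_Pair grid_adj_Pair)
  qed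
  consider "x < x'" | "x' < x"
    using assms(3) by linarith
  then show ?thesis
  proof cases
    case 1
    then show ?thesis
      using ordered[of x x'] assms by (auto simp: complete_vertices_def)
  next
    case 2
    then obtain y y' where "y \<in> grid_vertices (2 * k - 2)" "y' \<in> grid_vertices (2 * k - 2)"
      "grid_adj y y'" "complete_grid_map k y = {x'}" "complete_grid_map k y' = {x}"
      using ordered[of x' x] assms by (auto simp: complete_vertices_def)
    then show ?thesis
      using symp_grid_adj by (blast dest: sympD)
  qed
qed

lemma connected_last_branch_set:
  assumes "k \<ge> 2"
  shows "connected_in (grid_vertices (2 * k - 2)) grid_adj
           {y \<in> grid_vertices (2 * k - 2). k \<in> complete_grid_map k y}"
proof (rule connected_in_if_descent[OF symp_grid_adj _ _,
      where root = "(2 * k - 2, 1)" and f = "\<lambda>(r, c). c + (2 * k - 2 - r)"])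
  show "(2 * k - 2, 1) \<in> {y \<in> grid_vertices (2 * k - 2). k \<in> complete_grid_map k y}"
    using assms by (simp add: grid_vertices_Pair)
  fix s
  assume s: "s \<in> {y \<in> grid_vertices (2 * k - 2). k \<in> complete_grid_map k y}"
    "s \<noteq> (2 * k - 2, 1)"
  obtain r c where rc: "s = (r, c)"
    by fastforce
  have grid: "1 \<le> r" "r \<le> 2 * k - 2" "1 \<le> c" "c \<le> 2 * k - 2"
    using s rc by (auto simp: grid_vertices_Pair)
  have "c < r"
    using s rc last_in_complete_grid_map[OF grid] by auto
  show "\<exists>t\<in>{y \<in> grid_vertices (2 * k - 2). k \<in> complete_grid_map k y}. grid_adj s t \<and>
          (case t of (r, c) \<Rightarrow> c + (2 * k - 2 - r)) < (case s of (r, c) \<Rightarrow> c + (2 * k - 2 - r))"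
  proof (cases "c > 1")
    case True
    then show ?thesis
      using grid \<open>c < r\<close> rc
      by (intro bexI[of _ "(r, c - 1)"]) (auto simp: grid_adj_Pair grid_vertices_Pair)
  next
    case False
    then have "c = 1" "r < 2 * k - 2"
      using grid s rc by auto
    then show ?thesis
      using grid \<open>c < r\<close> rc
      by (intro bexI[of _ "(r + 1, c)"]) (auto simp: grid_adj_Pair grid_vertices_Pair)
  qed
qed auto

lemma connected_less_branch_set:
  assumes "1 \<le> a" "a < k"
  shows "connected_in (grid_vertices (2 * k - 2)) grid_adj
           {y \<in> grid_vertices (2 * k - 2). a \<in> complete_grid_map k y}"
proof (rule connected_in_if_descent[OF symp_grid_adj _ _,
      where root = "(2 * a - 1, 2 * a - 1)"
        and f = "\<lambda>(r, c). c - r + (if r = 2 * a then 2 else 0)"])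
  show "(2 * a - 1, 2 * a - 1) \<in> {y \<in> grid_vertices (2 * k - 2). a \<in> complete_grid_map k y}"
    using assms by (simp add: grid_vertices_Pair less_in_complete_grid_map) arith
  fix s
  assume s: "s \<in> {y \<in> grid_vertices (2 * k - 2). a \<in> complete_grid_map k y}"
    "s \<noteq> (2 * a - 1, 2 * a - 1)"
  obtain r c where rc: "s = (r, c)"
    by fastforce
  have grid: "1 \<le> r" "r \<le> 2 * k - 2" "1 \<le> c" "c \<le> 2 * k - 2"
    using s rc by (auto simp: grid_vertices_Pair)
  consider "r = 2 * a - 1" "2 * a - 1 < c" | "r = 2 * a" "even c" "2 * a \<le> c"
    | "c = 2 * a - 1" "r < c"
    using s rc less_in_complete_grid_map[OF assms] by fastforce
  then show "\<exists>t\<in>{y \<in> grid_vertices (2 * k - 2). a \<in> complete_grid_map k y}. grid_adj s t \<and>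
      (case t of (r, c) \<Rightarrow> c - r + (if r = 2 * a then 2 else 0)) <
      (case s of (r, c) \<Rightarrow> c - r + (if r = 2 * a then 2 else 0))"
  proof cases
    case 1
    then show ?thesis
      using grid rc assms by (intro bexI[of _ "(r, c - 1)"])
        (auto simp: grid_adj_Pair grid_vertices_Pair less_in_complete_grid_map)
  next
    case 2
    then show ?thesis
      using grid rc assms by (intro bexI[of _ "(r - 1, c)"])
        (auto simp: grid_adj_Pair grid_vertices_Pair less_in_complete_grid_map)
  next
    case 3
    then show ?thesis
      using grid rc assms by (intro bexI[of _ "(r + 1, c)"])
        (auto simp: grid_adj_Pair grid_vertices_Pair less_in_complete_grid_map)
  qed
qed auto

lemma connected_branch_set:
  assumes "k \<ge> 2" "x \<in> complete_vertices k"
  shows "connected_in (grid_vertices (2 * k - 2)) grid_adj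
           {y \<in> grid_vertices (2 * k - 2). x \<in> complete_grid_map k y}"
  using assms connected_last_branch_set connected_less_branch_set[of x k]
  by (cases "x = k") (auto simp: complete_vertices_def)

lemma complete_grid_map_doubleton:
  assumes "complete_grid_map k (r, c) = {x, x'}" "x \<noteq> x'"
  shows "r < c \<and> odd r \<and> odd c \<and> {x, x'} = {(r + 1) div 2, (c + 1) div 2}"
proof -
  have "\<not> c < r"
    using assms by (auto simp: doubleton_eq_iff)
  moreover have "odd c"
    using assms calculation by (auto simp: doubleton_eq_iff)
  moreover have "odd r"
    using assms calculation by (auto simp: doubleton_eq_iff)
  moreover have "r \<noteq> c"
    using assms calculation by (auto simp: doubleton_eq_iff)
  ultimately show ?thesis
    using assms by auto
qed

lemma complete_grid_map_near_doubleton: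
  assumes "r < c" "odd r" "odd c" "grid_adj (r, c) (r', c')"
  shows "complete_grid_map k (r', c') = {(r + 1) div 2} \<or>
         complete_grid_map k (r', c') = {(c + 1) div 2}"
proof -
  have "r + 1 < c"
    using assms(1-3) by presburger
  moreover have "(r' = r \<and> (c' = c + 1 \<or> c' + 1 = c)) \<or> (c' = c \<and> (r' = r + 1 \<or> r' + 1 = r))"
    using assms(4) by (simp add: grid_adj_Pair) arith
  ultimately show ?thesis
    using assms(1-3) by auto
qed

lemma complete_grid_map_doubleton_neighbour:
  assumes "complete_grid_map k y = {x, x'}" "x \<noteq> x'" "grid_adj y y'"
  shows "complete_grid_map k y' = {x} \<or> complete_grid_map k y' = {x'}"
proof -
  obtain r c r' c' where y: "y = (r, c)" and y': "y' = (r', c')"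
    by fastforce
  with assms have "r < c" "odd r" "odd c" and labels: "{x, x'} = {(r + 1) div 2, (c + 1) div 2}"
    using complete_grid_map_doubleton[of k r c x x'] by auto
  then have "complete_grid_map k y' = {(r + 1) div 2} \<or> complete_grid_map k y' = {(c + 1) div 2}"
    using complete_grid_map_near_doubleton[of r c r' c' k] assms(3) y y' by simp
  moreover have "(r + 1) div 2 \<in> {x, x'}" "(c + 1) div 2 \<in> {x, x'}"
    using labels by auto
  ultimately show ?thesis
    by (simp only: insert_iff empty_iff) metis
qed

theorem lemma6p10:
  fixes k :: nat
  assumes "k \<ge> 2"
  shows "is_almost_minor (complete_vertices k) complete_adj
           (grid_vertices (2 * k - 2)) grid_adj"
proof -
  have "almost_minor_map (complete_vertices k) complete_adj
      (grid_vertices (2 * k - 2)) grid_adj (complete_grid_map k)"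
    unfolding almost_minor_map_def complete_adj_def
    by (intro conjI)
      (use complete_grid_map_range[OF assms] in blast,
       use complete_grid_map_singleton[OF assms] in blast,
       use complete_grid_map_edge in blast,
       use connected_branch_set[OF assms] in blast,
       use complete_grid_map_doubleton_neighbour in blast)
  then show ?thesis
    unfolding is_almost_minor_def by blast
qed

end
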